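(* Consider on $M_h$ with $2h=1$ the reduced cylindrical integrable system $(\ell_{12},\ell_{34})$. Its bifurcation diagram (set of critical values of $(\ell_{12},\ell_{34}):M_h\to\mathbb R^2$) is composed of the four straight lines $\ell_{34}=\pm(1\pm\ell_{12})$, which intersect transversally at $(\pm1,0)$ and $(0,\pm1)$.
   Context: $\mathbf L=(\ell_{12},\ell_{13},\ell_{14},\ell_{23},\ell_{24},\ell_{34})\in\mathbb R^6\cong\mathfrak{so}(4)^*$ with the Lie–Poisson bracket of $\mathfrak{so}(4)$ (extending $\ell_{ji}=-\ell_{ij}$: $\{\ell_{ij},\ell_{jk}\}=-\ell_{ik}$ for distinct $i,j,k$, and $\{\ell_{ij},\ell_{kl}\}=0$ when $\{i,j\}\cap\{k,l\}=\emptyset$). $M_h=\{\mathbf L:\sum_{i<j}\ell_{ij}^2=2h,\ \ell_{12}\ell_{34}-\ell_{13}\ell_{24}+\ell_{14}\ell_{23}=0\}\cong S^2\times S^2$ is a symplectic leaf. *)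

theory Defs
  imports "HOL-Analysis.Analysis"
begin

definition l12 :: "real^6 \<Rightarrow> real" where "l12 L = L$1"
definition l13 :: "real^6 \<Rightarrow> real" where "l13 L = L$2"
definition l14 :: "real^6 \<Rightarrow> real" where "l14 L = L$3"
definition l23 :: "real^6 \<Rightarrow> real" where "l23 L = L$4"
definition l24 :: "real^6 \<Rightarrow> real" where "l24 L = L$5"
definition l34 :: "real^6 \<Rightarrow> real" where "l34 L = L$6"

definition casimirs :: "real^6 \<Rightarrow> real \<times> real" where
  "casimirs L = ((l12 L)^2 + (l13 L)^2 + (l14 L)^2 + (l23 L)^2 + (l24 L)^2 + (l34 L)^2,
                 l12 L * l34 L - l13 L * l24 L + l14 L * l23 L)"

definition M_leaf :: "real \<Rightarrow> (real^6) set" where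
  "M_leaf h = {L. casimirs L = (2 * h, 0)}"

definition cyl_F :: "real^6 \<Rightarrow> real \<times> real" where
  "cyl_F L = (l12 L, l34 L)"

definition level_tangent :: "('a::euclidean_space \<Rightarrow> 'c::euclidean_space) \<Rightarrow> 'a \<Rightarrow> 'a set" where
  "level_tangent G p = {v. frechet_derivative G (at p) v = 0}"

definition crit_point_on_level ::
  "('a::euclidean_space \<Rightarrow> 'b::euclidean_space) \<Rightarrow> ('a \<Rightarrow> 'c::euclidean_space) \<Rightarrow> 'a \<Rightarrow> bool" where
  "crit_point_on_level F G p \<longleftrightarrow> frechet_derivative F (at p) ` level_tangent G p \<noteq> UNIV"

definition bifurcation_diagram :: "real \<Rightarrow> (real \<times> real) set" where
  "bifurcation_diagram h = cyl_F ` {p \<in> M_leaf h. crit_point_on_level cyl_F casimirs p}"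

end

theory Submission
  imports Defs
begin

text \<open>The splitting \<open>so(4) = so(3) \<oplus> so(3)\<close> into self-dual and anti-self-dual parts
  \<open>x = (l12 + l34, l13 - l24, l14 + l23)\<close>, \<open>y = (l12 - l34, l13 + l24, l14 - l23)\<close> turns the
  Casimirs into \<open>(|x|\<^sup>2 + |y|\<^sup>2)/2\<close> and \<open>(|x|\<^sup>2 - |y|\<^sup>2)/4\<close>, so \<open>M\<^sub>h\<close> is the product of two
  spheres of radius \<open>\<surd>(2h)\<close>, and \<open>(l12, l34) = ((x\<^sub>1 + y\<^sub>1)/2, (x\<^sub>1 - y\<^sub>1)/2)\<close>.
  The tangent space at \<open>(u, w)\<close> is \<open>u\<^sup>\<bottom> \<times> w\<^sup>\<bottom>\<close>, and the first coordinate is onto on a plane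
  \<open>u\<^sup>\<bottom>\<close> unless \<open>u\<close> lies on the first axis. Hence the critical points are exactly those where
  one of the two factors sits at a pole \<open>x\<^sub>1 = \<plusminus>\<surd>(2h)\<close> or \<open>y\<^sub>1 = \<plusminus>\<surd>(2h)\<close>, which for
  \<open>2h = 1\<close> are the four lines \<open>l12 \<plusminus> l34 = \<plusminus>1\<close>.\<close>

definition self_dual :: "real^6 \<Rightarrow> real^3" where
  "self_dual L = vector [l12 L + l34 L, l13 L - l24 L, l14 L + l23 L]"

definition anti_self_dual :: "real^6 \<Rightarrow> real^3" where
  "anti_self_dual L = vector [l12 L - l34 L, l13 L + l24 L, l14 L - l23 L]"

definition so4_of_halves :: "real^3 \<Rightarrow> real^3 \<Rightarrow> real^6" where
  "so4_of_halves x y = vector [(x$1 + y$1) / 2, (x$2 + y$2) / 2, (x$3 + y$3) / 2,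
                               (x$3 - y$3) / 2, (y$2 - x$2) / 2, (x$1 - y$1) / 2]"

lemmas so4_coordinate_defs = l12_def l13_def l14_def l23_def l24_def l34_def

lemma self_dual_so4_of_halves [simp]: "self_dual (so4_of_halves x y) = x"
  by (simp add: vec_eq_iff forall_3 self_dual_def so4_of_halves_def so4_coordinate_defs vector_def field_simps)

lemma anti_self_dual_so4_of_halves [simp]: "anti_self_dual (so4_of_halves x y) = y"
  by (simp add: vec_eq_iff forall_3 anti_self_dual_def so4_of_halves_def so4_coordinate_defs vector_def field_simps)

lemma linear_self_dual: "linear self_dual"
  by (auto simp: linear_iff vec_eq_iff forall_3 self_dual_def so4_coordinate_defs algebra_simps)

lemma linear_anti_self_dual: "linear anti_self_dual"
  by (auto simp: linear_iff vec_eq_iff forall_3 anti_self_dual_def so4_coordinate_defs algebra_simps)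

lemma cyl_F_halves:
  "cyl_F L = ((self_dual L $ 1 + anti_self_dual L $ 1) / 2, (self_dual L $ 1 - anti_self_dual L $ 1) / 2)"
  by (simp add: cyl_F_def self_dual_def anti_self_dual_def)

lemma linear_cyl_F: "linear cyl_F"
  by (auto simp: linear_iff cyl_F_def so4_coordinate_defs)

lemma casimirs_halves:
  "casimirs L =
     ((self_dual L \<bullet> self_dual L + anti_self_dual L \<bullet> anti_self_dual L) / 2,
      (self_dual L \<bullet> self_dual L - anti_self_dual L \<bullet> anti_self_dual L) / 4)"
  by (simp add: casimirs_def self_dual_def anti_self_dual_def inner_vec_def sum_3
      power2_eq_square field_simps)

lemma M_leaf_iff_spheres:
  "L \<in> M_leaf h \<longleftrightarrow> self_dual L \<bullet> self_dual L = 2 * h \<and> anti_self_dual L \<bullet> anti_self_dual L = 2 * h"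
  unfolding M_leaf_def by (auto simp: casimirs_halves)

lemma has_derivative_casimirs:
  "(casimirs has_derivative
     (\<lambda>v. (self_dual p \<bullet> self_dual v + anti_self_dual p \<bullet> anti_self_dual v,
           (self_dual p \<bullet> self_dual v - anti_self_dual p \<bullet> anti_self_dual v) / 2))) (at p)"
  unfolding casimirs_halves [abs_def]
  by (auto intro!: derivative_eq_intros linear_imp_has_derivative linear_self_dual
      linear_anti_self_dual simp: inner_commute field_simps)

lemma level_tangent_casimirs:
  "level_tangent casimirs p =
     {v. self_dual p \<bullet> self_dual v = 0 \<and> anti_self_dual p \<bullet> anti_self_dual v = 0}"
  unfolding level_tangent_def frechet_derivative_at [OF has_derivative_casimirs, symmetric]
  by (auto simp: zero_prod_def)

lemma frechet_derivative_cyl_F: "frechet_derivative cyl_F (at p) = cyl_F"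
  using frechet_derivative_at [OF linear_imp_has_derivative [OF linear_cyl_F]] by simp

lemma coordinate_image_hyperplane_neq_UNIV:
  fixes u :: "real^'n"
  shows "(\<lambda>x. x $ k) ` {x. u \<bullet> x = 0} \<noteq> UNIV \<longleftrightarrow> u $ k \<noteq> 0 \<and> (\<forall>j. j \<noteq> k \<longrightarrow> u $ j = 0)"
proof
  assume "u $ k \<noteq> 0 \<and> (\<forall>j. j \<noteq> k \<longrightarrow> u $ j = 0)"
  then have "u = axis k (u $ k)" and "u $ k \<noteq> 0"
    by (auto simp: vec_eq_iff axis_def)
  then have "u \<bullet> x = u $ k * x $ k" for x
    by (metis inner_axis' inner_real_def)
  with \<open>u $ k \<noteq> 0\<close> have "1 \<notin> (\<lambda>x. x $ k) ` {x. u \<bullet> x = 0}"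
    by auto
  then show "(\<lambda>x. x $ k) ` {x. u \<bullet> x = 0} \<noteq> UNIV"
    by blast
next
  assume degenerate: "(\<lambda>x. x $ k) ` {x. u \<bullet> x = 0} \<noteq> UNIV"
  show "u $ k \<noteq> 0 \<and> (\<forall>j. j \<noteq> k \<longrightarrow> u $ j = 0)"
  proof (rule ccontr)
    assume not_on_axis: "\<not> (u $ k \<noteq> 0 \<and> (\<forall>j. j \<noteq> k \<longrightarrow> u $ j = 0))"
    have "a \<in> (\<lambda>x. x $ k) ` {x. u \<bullet> x = 0}" for a
    proof (cases "u $ k = 0")
      case True
      then show ?thesis
        by (intro image_eqI [of _ _ "axis k a"]) (auto simp: inner_axis)
    next
      case False
      with not_on_axis obtain j where "j \<noteq> k" "u $ j \<noteq> 0" by blast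
      show ?thesis
      proof (rule image_eqI [of _ _ "axis k a - axis j (u $ k * a / u $ j)"])
        show "a = (axis k a - axis j (u $ k * a / u $ j)) $ k"
          using \<open>j \<noteq> k\<close> by (simp add: axis_def)
        show "axis k a - axis j (u $ k * a / u $ j) \<in> {x. u \<bullet> x = 0}"
          using \<open>u $ j \<noteq> 0\<close> by (simp add: inner_diff_right inner_axis)
      qed
    qed
    with degenerate show False by blast
  qed
qed

lemma sphere_point_on_first_axis_iff:
  fixes u :: "real^3"
  assumes "u \<bullet> u = r" and "r > 0"
  shows "u $ 1 \<noteq> 0 \<and> (\<forall>j. j \<noteq> 1 \<longrightarrow> u $ j = 0) \<longleftrightarrow> (u $ 1)\<^sup>2 = r"
proof -
  have sphere: "(u $ 1)\<^sup>2 + (u $ 2)\<^sup>2 + (u $ 3)\<^sup>2 = r"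
    using assms(1) by (simp add: inner_vec_def sum_3 power2_eq_square)
  have "(\<forall>j. j \<noteq> 1 \<longrightarrow> u $ j = 0) \<longleftrightarrow> u $ 2 = 0 \<and> u $ 3 = 0"
    by (auto simp: forall_3)
  also have "\<dots> \<longleftrightarrow> (u $ 2)\<^sup>2 + (u $ 3)\<^sup>2 = 0"
    by simp
  finally show ?thesis
    using sphere assms(2) by auto
qed

lemma cyl_F_image_tangent_eq_UNIV_iff:
  "cyl_F ` {v. u \<bullet> self_dual v = 0 \<and> w \<bullet> anti_self_dual v = 0} = UNIV \<longleftrightarrow>
     (\<lambda>x. x $ 1) ` {x. u \<bullet> x = 0} = UNIV \<and> (\<lambda>y. y $ 1) ` {y. w \<bullet> y = 0} = UNIV"
proof -
  define half_sum_diff :: "real \<times> real \<Rightarrow> real \<times> real" where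
    "half_sum_diff = (\<lambda>(a, b). ((a + b) / 2, (a - b) / 2))"
  have "bij half_sum_diff"
    by (rule o_bij [where g = "\<lambda>(c, d). (c + d, c - d)"]) (auto simp: half_sum_diff_def fun_eq_iff field_simps)
  have image: "cyl_F ` {v. u \<bullet> self_dual v = 0 \<and> w \<bullet> anti_self_dual v = 0} =
        half_sum_diff ` ((\<lambda>x. x $ 1) ` {x. u \<bullet> x = 0} \<times> (\<lambda>y. y $ 1) ` {y. w \<bullet> y = 0})"
    (is "_ = half_sum_diff ` ?product")
  proof (intro equalityI subsetI)
    fix z assume "z \<in> cyl_F ` {v. u \<bullet> self_dual v = 0 \<and> w \<bullet> anti_self_dual v = 0}"
    then show "z \<in> half_sum_diff ` ?product"
      by (auto simp: cyl_F_halves half_sum_diff_def)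
  next
    fix z assume "z \<in> half_sum_diff ` ?product"
    then obtain x y where "u \<bullet> x = 0" "w \<bullet> y = 0" "z = half_sum_diff (x $ 1, y $ 1)"
      by auto
    then show "z \<in> cyl_F ` {v. u \<bullet> self_dual v = 0 \<and> w \<bullet> anti_self_dual v = 0}"
      by (intro image_eqI [of _ _ "so4_of_halves x y"]) (auto simp: cyl_F_halves half_sum_diff_def)
  qed
  have "half_sum_diff ` ?product = UNIV \<longleftrightarrow> ?product = UNIV"
    using \<open>bij half_sum_diff\<close> by (metis bij_def inj_image_eq_iff)
  moreover have "?product = UNIV \<longleftrightarrow>
      (\<lambda>x. x $ 1) ` {x. u \<bullet> x = 0} = UNIV \<and> (\<lambda>y. y $ 1) ` {y. w \<bullet> y = 0} = UNIV"
    by (metis UNIV_Times_UNIV UNIV_not_empty times_eq_iff)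
  ultimately show ?thesis
    unfolding image by blast
qed

lemma crit_point_on_level_iff:
  assumes "p \<in> M_leaf h" and "h > 0"
  shows "crit_point_on_level cyl_F casimirs p \<longleftrightarrow>
           (l12 p + l34 p)\<^sup>2 = 2 * h \<or> (l12 p - l34 p)\<^sup>2 = 2 * h"
proof -
  have spheres: "self_dual p \<bullet> self_dual p = 2 * h" "anti_self_dual p \<bullet> anti_self_dual p = 2 * h"
    using assms(1) by (simp_all add: M_leaf_iff_spheres)
  have "crit_point_on_level cyl_F casimirs p \<longleftrightarrow>
          (\<lambda>x. x $ 1) ` {x. self_dual p \<bullet> x = 0} \<noteq> UNIV \<or>
          (\<lambda>y. y $ 1) ` {y. anti_self_dual p \<bullet> y = 0} \<noteq> UNIV"
    unfolding crit_point_on_level_def frechet_derivative_cyl_F level_tangent_casimirs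
      cyl_F_image_tangent_eq_UNIV_iff by blast
  also have "\<dots> \<longleftrightarrow> (self_dual p $ 1)\<^sup>2 = 2 * h \<or> (anti_self_dual p $ 1)\<^sup>2 = 2 * h"
    unfolding coordinate_image_hyperplane_neq_UNIV
    using sphere_point_on_first_axis_iff [OF spheres(1)] sphere_point_on_first_axis_iff [OF spheres(2)]
      assms(2) by simp
  finally show ?thesis
    by (simp add: self_dual_def anti_self_dual_def)
qed

lemma bifurcation_diagram_eq:
  assumes "h > 0"
  shows "bifurcation_diagram h =
           cyl_F ` M_leaf h \<inter> {(x, y). (x + y)\<^sup>2 = 2 * h \<or> (x - y)\<^sup>2 = 2 * h}"
proof -
  define lines :: "(real \<times> real) set"
    where "lines = {(x, y). (x + y)\<^sup>2 = 2 * h \<or> (x - y)\<^sup>2 = 2 * h}"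
  have "{p \<in> M_leaf h. crit_point_on_level cyl_F casimirs p} = {p \<in> M_leaf h. cyl_F p \<in> lines}"
    using crit_point_on_level_iff [OF _ assms] by (auto simp: cyl_F_def lines_def)
  then have "cyl_F ` {p \<in> M_leaf h. crit_point_on_level cyl_F casimirs p} = cyl_F ` M_leaf h \<inter> lines"
    by blast
  then show ?thesis
    unfolding bifurcation_diagram_def lines_def .
qed

lemma pole_values_in_cyl_F_image:
  assumes "s\<^sup>2 = 2 * h" and "t\<^sup>2 = 2 * h"
  shows "((s + t) / 2, (s - t) / 2) \<in> cyl_F ` M_leaf h"
proof (rule image_eqI [of _ _ "so4_of_halves (axis 1 s) (axis 1 t)"])
  show "so4_of_halves (axis 1 s) (axis 1 t) \<in> M_leaf h"
    using assms by (simp add: M_leaf_iff_spheres inner_axis power2_eq_square)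
qed (simp add: cyl_F_halves)

theorem proposition8:
  assumes "2 * h = (1::real)"
  shows "bifurcation_diagram h =
           cyl_F ` M_leaf h \<inter>
           {(x, y). y = 1 + x \<or> y = -(1 + x) \<or> y = 1 - x \<or> y = -(1 - x)}
         \<and> {(1, 0), (-1, 0), (0, 1), (0, -1)} \<subseteq> bifurcation_diagram h"
proof -
  have lines: "{(x, y). (x + y)\<^sup>2 = 2 * h \<or> (x - y)\<^sup>2 = 2 * h} =
               {(x, y). y = 1 + x \<or> y = -(1 + x) \<or> y = 1 - x \<or> y = -(1 - x)}"
    using assms by (auto simp: power2_eq_1_iff)
  have diagram: "bifurcation_diagram h = cyl_F ` M_leaf h \<inter>
                   {(x, y). (x + y)\<^sup>2 = 2 * h \<or> (x - y)\<^sup>2 = 2 * h}"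
    using assms by (simp add: bifurcation_diagram_eq)
  have "((s + t) / 2, (s - t) / 2) \<in> bifurcation_diagram h" if "s\<^sup>2 = 1" "t\<^sup>2 = 1" for s t :: real
  proof -
    have "(s + t) / 2 + (s - t) / 2 = s" "(s + t) / 2 - (s - t) / 2 = t"
      by (simp_all add: field_simps)
    then show ?thesis
      using pole_values_in_cyl_F_image [of s h t] that assms by (simp add: diagram)
  qed
  from this [of 1 1] this [of "-1" "-1"] this [of 1 "-1"] this [of "-1" 1]
  have "{(1, 0), (-1, 0), (0, 1), (0, -1)} \<subseteq> bifurcation_diagram h"
    by simp
  with diagram lines show ?thesis
    by simp
qed

end
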